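(* Let $\boldsymbol{\mathcal{D}}=\{\mathcal{D}_1,\dots,\mathcal{D}_K\}$ with $K\ge2$, let $\mathcal{T}$ be a training algorithm and $n\ge1$. For any adversary $\mathcal{A}$ against $\mathsf{MM}$ there exist adversaries $\mathcal{A}^i_{\mathsf{MI}}$ ($i\in[K]$) and $\mathcal{A}^{i,j}_{\mathsf{PI}}$ ($i\ne j\in[K]$) such that $$\mathsf{Adv}_{\mathsf{MM}}(\mathcal{A}) \le \max_{i\in[K]}\mathsf{Adv}_{\mathsf{MI}_i}(\mathcal{A}^i_{\mathsf{MI}}) + \max_{i\ne j\in[K]}\mathsf{Adv}_{\mathsf{PI}_{i,j}}(\mathcal{A}^{i,j}_{\mathsf{PI}}).$$
   Context: Game $\mathsf{MM}(\mathcal{T},\boldsymbol{\mathcal{D}},n,\mathcal{A})$: $k\sim[K]$ uniformly; $k'\sim[K]\setminus\{k\}$ uniformly; $S\sim\mathcal{D}_k^n$; $\theta\gets\mathcal{T}(S)$; $b\sim\{0,1\}$ uniformly; if $b=0$ then $z\sim S$ (uniformly from $S$), else $z\sim\mathcal{D}_{k'}$; $\hat b\gets\mathcal{A}(\mathcal{T},\boldsymbol{\mathcal{D}},n,\theta,z)$. Game $\mathsf{MI}_i$: $S\sim\mathcal{D}_i^n$; $\theta\gets\mathcal{T}(S)$; $b\sim\{0,1\}$; if $b=0$ then $z\sim S$ else $z\sim\mathcal{D}_i$; $\hat b\gets\mathcal{A}^i_{\mathsf{MI}}(\mathcal{T},\mathcal{D}_i,n,\theta,z)$. Game $\mathsf{PI}_{i,j}$: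 $b\sim\{0,1\}$; if $b=0$ then $S\sim\mathcal{D}_i^n$ else $S\sim\mathcal{D}_j^n$; $\theta\gets\mathcal{T}(S)$; $\hat b\gets\mathcal{A}^{i,j}_{\mathsf{PI}}(\mathcal{T},\mathcal{D}_i,\mathcal{D}_j,n,\theta)$. For each of these games the advantage is $\Pr[\hat b=0\mid b=0]-\Pr[\hat b=0\mid b=1]$ (equivalently $2\Pr[\hat b=b]-1$). *)

theory Defs
  imports "HOL-Probability.Probability"
begin

fun iid_sample :: "'z pmf \<Rightarrow> nat \<Rightarrow> 'z list pmf" where
  "iid_sample D 0 = return_pmf []"
| "iid_sample D (Suc n) =
     bind_pmf D (\<lambda>x. bind_pmf (iid_sample D n) (\<lambda>xs. return_pmf (x # xs)))"

definition unif_from :: "'z list \<Rightarrow> 'z pmf" where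
  "unif_from S = map_pmf (\<lambda>i. S ! i) (pmf_of_set {0..<length S})"

text \<open>Bits: False = 0, True = 1. The games return the distribution of the
  adversary's guess given the challenge bit b.\<close>

definition MM_game ::
  "('z list \<Rightarrow> 'th pmf) \<Rightarrow> (nat \<Rightarrow> 'z pmf) \<Rightarrow> nat \<Rightarrow> nat
   \<Rightarrow> ('th \<Rightarrow> 'z \<Rightarrow> bool pmf) \<Rightarrow> bool \<Rightarrow> bool pmf" where
  "MM_game T D K n A b =
     bind_pmf (pmf_of_set {0..<K}) (\<lambda>k.
     bind_pmf (pmf_of_set ({0..<K} - {k})) (\<lambda>k'.
     bind_pmf (iid_sample (D k) n) (\<lambda>S.
     bind_pmf (T S) (\<lambda>\<theta>.
     bind_pmf (if b then D k' else unif_from S) (\<lambda>z.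
     A \<theta> z)))))"

definition MI_game ::
  "('z list \<Rightarrow> 'th pmf) \<Rightarrow> 'z pmf \<Rightarrow> nat
   \<Rightarrow> ('th \<Rightarrow> 'z \<Rightarrow> bool pmf) \<Rightarrow> bool \<Rightarrow> bool pmf" where
  "MI_game T Di n A b =
     bind_pmf (iid_sample Di n) (\<lambda>S.
     bind_pmf (T S) (\<lambda>\<theta>.
     bind_pmf (if b then Di else unif_from S) (\<lambda>z.
     A \<theta> z)))"

definition PI_game ::
  "('z list \<Rightarrow> 'th pmf) \<Rightarrow> 'z pmf \<Rightarrow> 'z pmf \<Rightarrow> nat
   \<Rightarrow> ('th \<Rightarrow> bool pmf) \<Rightarrow> bool \<Rightarrow> bool pmf" where
  "PI_game T Di Dj n A b =
     bind_pmf (iid_sample (if b then Dj else Di) n) (\<lambda>S.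
     bind_pmf (T S) (\<lambda>\<theta>. A \<theta>))"

definition adv :: "(bool \<Rightarrow> bool pmf) \<Rightarrow> real" where
  "adv G = pmf (G False) False - pmf (G True) False"

definition Adv_MM where "Adv_MM T D K n A = adv (MM_game T D K n A)"
definition Adv_MI where "Adv_MI T Di n A = adv (MI_game T Di n A)"
definition Adv_PI where "Adv_PI T Di Dj n A = adv (PI_game T Di Dj n A)"

end

theory Submission
  imports Defs
begin

text \<open>Let \<open>P\<^sub>k\<close> be the probability that \<open>A\<close> answers 0 on a member of \<open>S \<sim> D\<^sub>k\<^sup>n\<close>, and
  \<open>Q\<^sub>k\<^sub>k\<^sub>'\<close> the probability that it answers 0 on a fresh point from \<open>D\<^sub>k\<^sub>'\<close>. The MM
  advantage is the average of \<open>P\<^sub>k - Q\<^sub>k\<^sub>k\<^sub>'\<close> over ordered pairs \<open>k \<noteq> k'\<close>. Since every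
  \<open>k'\<close> occurs equally often, \<open>Q\<^sub>k\<^sub>'\<^sub>k\<^sub>'\<close> and \<open>Q\<^sub>k\<^sub>k\<close> have the same average, so the MM
  advantage equals the average of \<open>P\<^sub>k - Q\<^sub>k\<^sub>k\<close> plus the average of \<open>Q\<^sub>k\<^sub>'\<^sub>k\<^sub>' - Q\<^sub>k\<^sub>k\<^sub>'\<close>.
  The former is the MI advantage of \<open>A\<close> for \<open>D\<^sub>k\<close>; the latter is the PI advantage for
  \<open>(D\<^sub>k\<^sub>', D\<^sub>k)\<close> of the adversary that draws its own challenge from \<open>D\<^sub>k\<^sub>'\<close> and runs \<open>A\<close>.\<close>

lemma remove_nonempty_if_card_ge_2:
  assumes "card I \<ge> 2"
  shows "I - {k} \<noteq> {}"
proof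
  assume "I - {k} = {}"
  then have "card I \<le> card {k}"
    by (intro card_mono) auto
  with assms show False by simp
qed

lemma sum_sum_remove:
  fixes f :: "'a \<Rightarrow> 'b::comm_ring_1"
  assumes "finite I"
  shows "(\<Sum>k\<in>I. \<Sum>k'\<in>I - {k}. f k') = of_nat (card I - 1) * sum f I"
proof (cases "I = {}")
  case False
  then have "card I \<ge> 1"
    using assms by (simp add: Suc_le_eq card_gt_0_iff)
  have "(\<Sum>k\<in>I. \<Sum>k'\<in>I - {k}. f k') = (\<Sum>k\<in>I. sum f I - f k)"
    using assms by (simp add: sum_diff1)
  also have "\<dots> = of_nat (card I) * sum f I - sum f I"
    by (simp add: sum_subtractf)
  finally show ?thesis
    using \<open>card I \<ge> 1\<close> by (simp add: of_nat_diff algebra_simps)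
qed simp

lemma mean_le:
  fixes f :: "'a \<Rightarrow> real"
  assumes "finite I" "I \<noteq> {}" "\<And>i. i \<in> I \<Longrightarrow> f i \<le> M"
  shows "sum f I / card I \<le> M"
  using sum_bounded_above[of I f M] assms by (simp add: divide_le_eq mult.commute)

lemma mean_offdiag_decompose:
  fixes P :: "'a \<Rightarrow> real" and Q :: "'a \<Rightarrow> 'a \<Rightarrow> real"
  assumes "finite I" "card I \<ge> 2"
  shows "(\<Sum>k\<in>I. P k - (\<Sum>k'\<in>I - {k}. Q k k') / (card I - 1)) / card I
       = (\<Sum>k\<in>I. P k - Q k k) / card I
         + (\<Sum>k\<in>I. (\<Sum>k'\<in>I - {k}. Q k' k' - Q k k') / (card I - 1)) / card I"
proof -
  have "(\<Sum>k\<in>I. (\<Sum>k'\<in>I - {k}. Q k' k') / (card I - 1)) = (\<Sum>k\<in>I. Q k k)"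
    using assms by (simp add: sum_divide_distrib[symmetric] sum_sum_remove[of I "\<lambda>k. Q k k"])
  then show ?thesis
    by (simp add: sum_subtractf diff_divide_distrib add_divide_distrib)
qed

lemma mean_offdiag_le:
  fixes g :: "'a \<Rightarrow> 'a \<Rightarrow> real"
  assumes "card I \<ge> 2" "\<And>k k'. k \<in> I \<Longrightarrow> k' \<in> I \<Longrightarrow> k' \<noteq> k \<Longrightarrow> g k k' \<le> M"
  shows "(\<Sum>k\<in>I. (\<Sum>k'\<in>I - {k}. g k k') / (card I - 1)) / card I \<le> M"
proof (rule mean_le)
  show "finite I" "I \<noteq> {}"
    using assms(1) by (auto intro: card_ge_0_finite)
  fix k assume "k \<in> I"
  with assms have "(\<Sum>k'\<in>I - {k}. g k k') / card (I - {k}) \<le> M"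
    using \<open>finite I\<close> remove_nonempty_if_card_ge_2[OF assms(1)] by (intro mean_le) auto
  with \<open>k \<in> I\<close> \<open>finite I\<close> show "(\<Sum>k'\<in>I - {k}. g k k') / (card I - 1) \<le> M"
    by simp
qed

definition pr_guess_member ::
  "('z list \<Rightarrow> 'th pmf) \<Rightarrow> 'z pmf \<Rightarrow> nat \<Rightarrow> ('th \<Rightarrow> 'z \<Rightarrow> bool pmf) \<Rightarrow> real" where
  "pr_guess_member T Ds n A =
     pmf (bind_pmf (iid_sample Ds n) (\<lambda>S. bind_pmf (T S) (\<lambda>\<theta>.
          bind_pmf (unif_from S) (A \<theta>)))) False"

definition pr_guess_fresh ::
  "('z list \<Rightarrow> 'th pmf) \<Rightarrow> 'z pmf \<Rightarrow> 'z pmf \<Rightarrow> nat \<Rightarrow> ('th \<Rightarrow> 'z \<Rightarrow> bool pmf) \<Rightarrow> real" where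
  "pr_guess_fresh T Ds Dz n A =
     pmf (bind_pmf (iid_sample Ds n) (\<lambda>S. bind_pmf (T S) (\<lambda>\<theta>.
          bind_pmf Dz (A \<theta>)))) False"

lemma Adv_MI_eq:
  "Adv_MI T Di n A = pr_guess_member T Di n A - pr_guess_fresh T Di Di n A"
  by (simp add: Adv_MI_def adv_def MI_game_def pr_guess_member_def pr_guess_fresh_def)

lemma Adv_PI_sampling_eq:
  "Adv_PI T Di Dj n (\<lambda>\<theta>. bind_pmf Dz (A \<theta>))
     = pr_guess_fresh T Di Dz n A - pr_guess_fresh T Dj Dz n A"
  by (simp add: Adv_PI_def adv_def PI_game_def pr_guess_fresh_def bind_assoc_pmf)

lemma Adv_MM_eq:
  assumes "K \<ge> 2"
  shows "Adv_MM T D K n A =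
           (\<Sum>k\<in>{0..<K}. pr_guess_member T (D k) n A
              - (\<Sum>k'\<in>{0..<K} - {k}. pr_guess_fresh T (D k) (D k') n A) / (K - 1)) / K"
proof -
  have "pmf (MM_game T D K n A False) False
          = (\<Sum>k\<in>{0..<K}. pr_guess_member T (D k) n A) / K"
    using assms by (simp add: MM_game_def pmf_bind_pmf_of_set pr_guess_member_def)
  moreover have "pmf (MM_game T D K n A True) False
          = (\<Sum>k\<in>{0..<K}. (\<Sum>k'\<in>{0..<K} - {k}. pr_guess_fresh T (D k) (D k') n A) / (K - 1)) / K"
    using assms remove_nonempty_if_card_ge_2[of "{0..<K}"]
    by (simp add: MM_game_def pmf_bind_pmf_of_set pr_guess_fresh_def card_Diff_singleton_if)
  ultimately show ?thesis
    by (simp add: Adv_MM_def adv_def sum_subtractf diff_divide_distrib)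
qed

theorem mainTheorem9:
  fixes T :: "'z list \<Rightarrow> 'th pmf"
    and D :: "nat \<Rightarrow> 'z pmf"
    and K n :: nat
    and A :: "'th \<Rightarrow> 'z \<Rightarrow> bool pmf"
  assumes "K \<ge> 2" and "n \<ge> 1"
  shows "\<exists>(AMI :: nat \<Rightarrow> 'th \<Rightarrow> 'z \<Rightarrow> bool pmf)
            (API :: nat \<Rightarrow> nat \<Rightarrow> 'th \<Rightarrow> bool pmf).
           Adv_MM T D K n A
             \<le> Max ((\<lambda>i. Adv_MI T (D i) n (AMI i)) ` {0..<K})
               + Max ((\<lambda>(i, j). Adv_PI T (D i) (D j) n (API i j)) `
                       {(i, j). i < K \<and> j < K \<and> i \<noteq> j})"
proof -
  define API where "API = (\<lambda>i (j::nat) \<theta>. bind_pmf (D i) (A \<theta>))"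
  define M\<^sub>M\<^sub>I where "M\<^sub>M\<^sub>I = Max ((\<lambda>i. Adv_MI T (D i) n A) ` {0..<K})"
  define M\<^sub>P\<^sub>I where "M\<^sub>P\<^sub>I = Max ((\<lambda>(i, j). Adv_PI T (D i) (D j) n (API i j)) `
                       {(i, j). i < K \<and> j < K \<and> i \<noteq> j})"
  have MI_le: "Adv_MI T (D k) n A \<le> M\<^sub>M\<^sub>I" if "k < K" for k
    unfolding M\<^sub>M\<^sub>I_def using that by (intro Max_ge) auto
  have PI_le: "Adv_PI T (D k') (D k) n (API k' k) \<le> M\<^sub>P\<^sub>I" if "k < K" "k' < K" "k' \<noteq> k" for k k'
  proof -
    have "finite {(i, j). i < K \<and> j < K \<and> i \<noteq> j}"
      by (rule finite_subset[of _ "{0..<K} \<times> {0..<K}"]) auto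
    then show ?thesis
      unfolding M\<^sub>P\<^sub>I_def using that by (intro Max_ge) force+
  qed
  have "Adv_MM T D K n A
      = (\<Sum>k\<in>{0..<K}. Adv_MI T (D k) n A) / K
        + (\<Sum>k\<in>{0..<K}. (\<Sum>k'\<in>{0..<K} - {k}. Adv_PI T (D k') (D k) n (API k' k)) / (K - 1)) / K"
    using mean_offdiag_decompose[of "{0..<K}"] assms(1)
    by (simp add: Adv_MM_eq Adv_MI_eq API_def Adv_PI_sampling_eq)
  also have "\<dots> \<le> M\<^sub>M\<^sub>I + M\<^sub>P\<^sub>I"
    using mean_le[of "{0..<K}"] MI_le mean_offdiag_le[of "{0..<K}"] PI_le assms(1)
    by (intro add_mono) auto
  finally show ?thesis
    unfolding M\<^sub>M\<^sub>I_def M\<^sub>P\<^sub>I_def by (intro exI[of _ "\<lambda>_. A"] exI[of _ API])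
qed

end
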